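(* Let $G_1$ be a finite $k$-graph with $k\ge 3$. Then the line graph $G_2=L(G_1)$ is symmetric with respect to graph entropy, i.e., the uniform distribution on $V(G_2)$ maximizes $H(G_2,P)$ over all probability distributions $P$ on $V(G_2)$.
   Context: A $k$-graph is a $k$-regular graph whose fractional edge-colouring number equals $k$; here the fractional edge-colouring number $\chi'_f(G_1)$ is $\min\{\sum_{M}\lambda_M : \lambda\ge 0,\ \sum_M \lambda_M \mathbf b_M=\mathbf 1\}$, the sum ranging over all matchings $M$ of $G_1$ with characteristic vectors $\mathbf b_M\in\mathbb{R}^{E(G_1)}$. The line graph $L(G_1)$ has vertex set $E(G_1)$, two edges adjacent when they share an endpoint. For a finite graph $G$ with $V(G)=\{1,\dots,n\}$, the vertex packing polytope $VP(G)$ is the convex hull of the characteristic vectors of independent sets of $G$, and for a probability distribution $P$ on $V(G)$ the graph entropy is $H(G,P)=\min_{\mathbf a\in VP(G)}\sum_{i=1}^n p_i\log(1/a_i)$. *)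

theory Defs
  imports Complex_Main
begin

text \<open>Finite loopless multigraphs: vertex set V, edge set E, and an endpoint map
  assigning to every edge its set of two distinct endpoints (parallel edges allowed).\<close>

definition multigraph :: "'v set \<Rightarrow> 'e set \<Rightarrow> ('e \<Rightarrow> 'v set) \<Rightarrow> bool" where
  "multigraph V E ends \<longleftrightarrow> finite V \<and> finite E \<and>
     (\<forall>e\<in>E. ends e \<subseteq> V \<and> card (ends e) = 2)"

definition degree :: "'e set \<Rightarrow> ('e \<Rightarrow> 'v set) \<Rightarrow> 'v \<Rightarrow> nat" where
  "degree E ends v = card {e\<in>E. v \<in> ends e}"

definition regular :: "'v set \<Rightarrow> 'e set \<Rightarrow> ('e \<Rightarrow> 'v set) \<Rightarrow> nat \<Rightarrow> bool" where
  "regular V E ends k \<longleftrightarrow> (\<forall>v\<in>V. degree E ends v = k)"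

definition matching :: "'e set \<Rightarrow> ('e \<Rightarrow> 'v set) \<Rightarrow> 'e set \<Rightarrow> bool" where
  "matching E ends M \<longleftrightarrow> M \<subseteq> E \<and>
     (\<forall>e\<in>M. \<forall>f\<in>M. e \<noteq> f \<longrightarrow> ends e \<inter> ends f = {})"

definition matchings :: "'e set \<Rightarrow> ('e \<Rightarrow> 'v set) \<Rightarrow> 'e set set" where
  "matchings E ends = {M. matching E ends M}"

definition frac_edge_chromatic :: "'e set \<Rightarrow> ('e \<Rightarrow> 'v set) \<Rightarrow> real" where
  "frac_edge_chromatic E ends =
     Inf {(\<Sum>M\<in>matchings E ends. lam M) | lam.
            (\<forall>M\<in>matchings E ends. lam M \<ge> 0) \<and>
            (\<forall>e\<in>E. (\<Sum>M\<in>matchings E ends. lam M * (if e \<in> M then 1 else 0)) = 1)}"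

definition k_graph :: "'v set \<Rightarrow> 'e set \<Rightarrow> ('e \<Rightarrow> 'v set) \<Rightarrow> nat \<Rightarrow> bool" where
  "k_graph V E ends k \<longleftrightarrow> regular V E ends k \<and> frac_edge_chromatic E ends = real k"

definition line_adj :: "('e \<Rightarrow> 'v set) \<Rightarrow> 'e \<Rightarrow> 'e \<Rightarrow> bool" where
  "line_adj ends e f \<longleftrightarrow> e \<noteq> f \<and> ends e \<inter> ends f \<noteq> {}"

definition independent :: "'a set \<Rightarrow> ('a \<Rightarrow> 'a \<Rightarrow> bool) \<Rightarrow> 'a set \<Rightarrow> bool" where
  "independent S adj I \<longleftrightarrow> I \<subseteq> S \<and> (\<forall>x\<in>I. \<forall>y\<in>I. \<not> adj x y)"

text \<open>Vertex packing polytope: convex hull of characteristic vectors (in S \<Rightarrow> real,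
  extended by 0 outside S) of independent sets, written out as convex combinations.\<close>

definition VP :: "'a set \<Rightarrow> ('a \<Rightarrow> 'a \<Rightarrow> bool) \<Rightarrow> ('a \<Rightarrow> real) set" where
  "VP S adj = {a. \<exists>mu :: 'a set \<Rightarrow> real.
      (\<forall>I\<in>{I. independent S adj I}. mu I \<ge> 0) \<and>
      (\<Sum>I\<in>{I. independent S adj I}. mu I) = 1 \<and>
      (\<forall>i. a i = (\<Sum>I\<in>{I. independent S adj I}. mu I * (if i \<in> I then 1 else 0)))}"

definition prob_dist :: "'a set \<Rightarrow> ('a \<Rightarrow> real) \<Rightarrow> bool" where
  "prob_dist S p \<longleftrightarrow> (\<forall>i\<in>S. p i \<ge> 0) \<and> (\<Sum>i\<in>S. p i) = 1"

text \<open>Graph entropy H(G,P) = min over a in VP(G) of sum p_i log(1/a_i), with the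
  convention 0 log(1/0) = 0 (points with a_i = 0 < p_i give value +infinity and are
  excluded).\<close>

definition graph_entropy :: "'a set \<Rightarrow> ('a \<Rightarrow> 'a \<Rightarrow> bool) \<Rightarrow> ('a \<Rightarrow> real) \<Rightarrow> real" where
  "graph_entropy S adj p =
     Inf {(\<Sum>i\<in>S. p i * log 2 (1 / a i)) | a.
            a \<in> VP S adj \<and> (\<forall>i\<in>S. p i > 0 \<longrightarrow> a i > 0)}"

definition uniform_dist :: "'a set \<Rightarrow> 'a \<Rightarrow> real" where
  "uniform_dist S = (\<lambda>i. 1 / real (card S))"

definition entropy_symmetric :: "'a set \<Rightarrow> ('a \<Rightarrow> 'a \<Rightarrow> bool) \<Rightarrow> bool" where
  "entropy_symmetric S adj \<longleftrightarrow>
     (\<forall>p. prob_dist S p \<longrightarrow> graph_entropy S adj p \<le> graph_entropy S adj (uniform_dist S))"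

end

theory Submission
  imports Defs
begin

text \<open>The independent sets of the line graph are exactly the matchings. Rescaling a fractional
  edge colouring of total weight \<open>w\<close> therefore gives a point of the vertex packing polytope
  that is \<open>1/w\<close> on every edge, so \<open>H(L(G), P) \<le> log \<chi>'\<^sub>f(G)\<close> for every distribution \<open>P\<close>.
  Conversely, a matching of a graph on \<open>n\<close> vertices has at most \<open>n/2\<close> edges, so every point
  \<open>a\<close> of the polytope has coordinate sum at most \<open>n/2 = |E|/k\<close> when \<open>G\<close> is \<open>k\<close>-regular;
  by \<open>ln x \<le> x - 1\<close> applied to \<open>k a\<^sub>e\<close>, the uniform distribution has entropy at least \<open>log k\<close>.
  For a \<open>k\<close>-graph both bounds equal \<open>log k\<close>.\<close>

lemma independent_line_adj_eq_matchings:
  "{I. independent E (line_adj ends) I} = matchings E ends"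
  by (auto simp: independent_def matchings_def matching_def line_adj_def)

lemma finite_matchings: "finite E \<Longrightarrow> finite (matchings E ends)"
  by (rule finite_subset[of _ "Pow E"]) (auto simp: matchings_def matching_def)

lemma VP_bounded:
  assumes "a \<in> VP S adj"
  shows "0 \<le> a i \<and> a i \<le> 1"
proof -
  let ?\<I> = "{I. independent S adj I}"
  from assms obtain mu where mu: "\<forall>I\<in>?\<I>. mu I \<ge> 0" "(\<Sum>I\<in>?\<I>. mu I) = 1"
    "a i = (\<Sum>I\<in>?\<I>. mu I * (if i \<in> I then 1 else 0))"
    unfolding VP_def by blast
  have "a i \<ge> 0" using mu by (auto intro!: sum_nonneg)
  moreover have "a i \<le> (\<Sum>I\<in>?\<I>. mu I)"
    unfolding mu(3) by (rule sum_mono) (use mu(1) in auto)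
  ultimately show ?thesis using mu(2) by simp
qed

lemma graph_entropy_bdd_below:
  assumes "\<forall>i\<in>S. p i \<ge> 0"
  shows "bdd_below {(\<Sum>i\<in>S. p i * log 2 (1 / a i)) | a.
            a \<in> VP S adj \<and> (\<forall>i\<in>S. p i > 0 \<longrightarrow> a i > 0)}"
proof (rule bdd_belowI[of _ 0], clarify)
  fix a assume a: "a \<in> VP S adj" "\<forall>i\<in>S. p i > 0 \<longrightarrow> a i > 0"
  show "0 \<le> (\<Sum>i\<in>S. p i * log 2 (1 / a i))"
  proof (rule sum_nonneg)
    fix i assume i: "i \<in> S"
    show "0 \<le> p i * log 2 (1 / a i)"
    proof (cases "p i > 0")
      case True
      with a i have "0 < a i" "a i \<le> 1" using VP_bounded[OF a(1)] by auto
      then have "log 2 (1 / a i) \<ge> 0" by simp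
      with True show ?thesis by simp
    next
      case False
      with assms i show ?thesis by force
    qed
  qed
qed

definition fractional_edge_colouring :: "'e set \<Rightarrow> ('e \<Rightarrow> 'v set) \<Rightarrow> ('e set \<Rightarrow> real) \<Rightarrow> bool" where
  "fractional_edge_colouring E ends lam \<longleftrightarrow> (\<forall>M\<in>matchings E ends. lam M \<ge> 0) \<and>
     (\<forall>e\<in>E. (\<Sum>M\<in>matchings E ends. lam M * (if e \<in> M then 1 else 0)) = 1)"

lemma frac_edge_chromatic_eq_Inf:
  "frac_edge_chromatic E ends =
     Inf {(\<Sum>M\<in>matchings E ends. lam M) | lam. fractional_edge_colouring E ends lam}"
  unfolding frac_edge_chromatic_def fractional_edge_colouring_def by simp

lemma frac_edge_chromatic_empty: "frac_edge_chromatic {} ends = 0"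
proof -
  have "matchings {} ends = {{}}" by (auto simp: matchings_def matching_def)
  then have "{(\<Sum>M\<in>matchings {} ends. lam M) | lam. fractional_edge_colouring {} ends lam}
      = {0..}"
    by (force simp: fractional_edge_colouring_def)
  then show ?thesis by (simp add: frac_edge_chromatic_eq_Inf)
qed

lemma fractional_edge_colouring_singletons:
  assumes "finite E"
  shows "fractional_edge_colouring E ends (\<lambda>M. if card M = 1 then 1 else 0)"
  unfolding fractional_edge_colouring_def
proof (intro conjI ballI)
  fix e assume e: "e \<in> E"
  then have "{e} \<in> matchings E ends" by (auto simp: matchings_def matching_def)
  have "(\<Sum>M\<in>matchings E ends. (if card M = 1 then 1 else 0) * (if e \<in> M then 1 else 0))
      = (\<Sum>M\<in>matchings E ends. if M = {e} then 1 else 0::real)"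
    by (rule sum.cong) (auto simp: card_1_singleton_iff)
  also have "\<dots> = 1"
    using \<open>{e} \<in> matchings E ends\<close> finite_matchings[OF assms, of ends]
    by (simp add: sum.delta)
  finally show "(\<Sum>M\<in>matchings E ends.
      (if card M = 1 then 1 else 0) * (if e \<in> M then 1 else 0)) = (1::real)" .
qed auto

lemma fractional_edge_colouring_weight_ge_one:
  assumes "fractional_edge_colouring E ends lam" "e \<in> E"
  shows "(\<Sum>M\<in>matchings E ends. lam M) \<ge> 1"
proof -
  have "1 = (\<Sum>M\<in>matchings E ends. lam M * (if e \<in> M then 1 else 0))"
    using assms unfolding fractional_edge_colouring_def by auto
  also have "\<dots> \<le> (\<Sum>M\<in>matchings E ends. lam M)"
    by (rule sum_mono) (use assms in \<open>auto simp: fractional_edge_colouring_def\<close>)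
  finally show ?thesis .
qed

lemma fractional_edge_colouring_scaled_in_VP:
  assumes "fractional_edge_colouring E ends lam" "E \<noteq> {}"
  defines "w \<equiv> (\<Sum>M\<in>matchings E ends. lam M)"
  obtains a where "a \<in> VP E (line_adj ends)" "\<And>e. e \<in> E \<Longrightarrow> a e = 1 / w"
proof
  define a where "a = (\<lambda>i. \<Sum>M\<in>matchings E ends. (lam M / w) * (if i \<in> M then 1 else 0))"
  have w: "w \<ge> 1"
    using assms(2) fractional_edge_colouring_weight_ge_one[OF assms(1)] by (auto simp: w_def)
  show "a \<in> VP E (line_adj ends)"
    unfolding VP_def independent_line_adj_eq_matchings
  proof (intro CollectI exI[of _ "\<lambda>M. lam M / w"] conjI allI ballI)
    fix M assume "M \<in> matchings E ends"
    then show "0 \<le> lam M / w" using assms(1) w by (auto simp: fractional_edge_colouring_def)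
  next
    show "(\<Sum>M\<in>matchings E ends. lam M / w) = 1"
      using w by (simp add: sum_divide_distrib[symmetric] w_def)
  qed (simp add: a_def)
  fix e assume "e \<in> E"
  then show "a e = 1 / w"
    using assms(1) unfolding a_def fractional_edge_colouring_def
    by (simp add: sum_divide_distrib[symmetric])
qed

lemma graph_entropy_line_graph_le_log_weight:
  assumes "fractional_edge_colouring E ends lam" "E \<noteq> {}" "prob_dist E p"
  shows "graph_entropy E (line_adj ends) p \<le> log 2 (\<Sum>M\<in>matchings E ends. lam M)"
proof -
  define w where "w = (\<Sum>M\<in>matchings E ends. lam M)"
  obtain a where a: "a \<in> VP E (line_adj ends)" "\<And>e. e \<in> E \<Longrightarrow> a e = 1 / w"
    using fractional_edge_colouring_scaled_in_VP[OF assms(1,2)] unfolding w_def by blast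
  have "w \<ge> 1"
    using assms(2) fractional_edge_colouring_weight_ge_one[OF assms(1)] by (auto simp: w_def)
  have "(\<Sum>i\<in>E. p i * log 2 (1 / a i)) = (\<Sum>i\<in>E. p i) * log 2 w"
    by (simp add: a(2) sum_distrib_right)
  also have "\<dots> = log 2 w" using assms(3) by (simp add: prob_dist_def)
  finally have "log 2 w \<in> {(\<Sum>i\<in>E. p i * log 2 (1 / a i)) | a.
      a \<in> VP E (line_adj ends) \<and> (\<forall>i\<in>E. p i > 0 \<longrightarrow> a i > 0)}"
    using a \<open>w \<ge> 1\<close> by (intro CollectI exI[of _ a]) auto
  then show ?thesis
    unfolding graph_entropy_def w_def[symmetric]
    by (rule cInf_lower[OF _ graph_entropy_bdd_below]) (use assms(3) in \<open>simp add: prob_dist_def\<close>)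
qed

lemma graph_entropy_line_graph_le_log_frac_edge_chromatic:
  assumes "finite E" "E \<noteq> {}" "prob_dist E p"
  shows "graph_entropy E (line_adj ends) p \<le> log 2 (frac_edge_chromatic E ends)"
proof -
  let ?H = "graph_entropy E (line_adj ends) p"
  have "2 powr ?H \<le> frac_edge_chromatic E ends"
    unfolding frac_edge_chromatic_eq_Inf
  proof (rule cInf_greatest)
    show "{(\<Sum>M\<in>matchings E ends. lam M) | lam. fractional_edge_colouring E ends lam} \<noteq> {}"
      using fractional_edge_colouring_singletons[OF assms(1)] by blast
  next
    fix w assume "w \<in> {(\<Sum>M\<in>matchings E ends. lam M) | lam. fractional_edge_colouring E ends lam}"
    then obtain lam where lam: "fractional_edge_colouring E ends lam"
      and w: "w = (\<Sum>M\<in>matchings E ends. lam M)" by blast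
    have "w \<ge> 1"
      using assms(2) fractional_edge_colouring_weight_ge_one[OF lam] by (auto simp: w)
    then show "2 powr ?H \<le> w"
      using graph_entropy_line_graph_le_log_weight[OF lam assms(2,3)]
      by (simp add: w[symmetric] le_log_iff)
  qed
  then have "log 2 (2 powr ?H) \<le> log 2 (frac_edge_chromatic E ends)"
    by (subst log_le_cancel_iff) (auto intro: order_less_le_trans[of 0 "2 powr ?H"])
  then show ?thesis by simp
qed

lemma card_matching_le:
  assumes "multigraph V E ends" "matching E ends M"
  shows "2 * card M \<le> card V"
proof -
  have M: "M \<subseteq> E" using assms(2) by (auto simp: matching_def)
  have ends2: "\<And>e. e \<in> M \<Longrightarrow> card (ends e) = 2" and endsV: "(\<Union>e\<in>M. ends e) \<subseteq> V"
    using M assms(1) by (auto simp: multigraph_def)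
  have fin: "finite M" "finite V"
    using M assms(1) finite_subset by (auto simp: multigraph_def)
  have "2 * card M = (\<Sum>e\<in>M. card (ends e))" by (simp add: ends2)
  also have "\<dots> = card (\<Union>e\<in>M. ends e)"
  proof (rule card_UN_disjoint[symmetric, OF fin(1)])
    show "\<forall>e\<in>M. finite (ends e)" 
      by (metis ends2 card.infinite zero_neq_numeral)
    show "\<forall>e\<in>M. \<forall>f\<in>M. e \<noteq> f \<longrightarrow> ends e \<inter> ends f = {}"
      using assms(2) by (auto simp: matching_def)
  qed
  also have "\<dots> \<le> card V" using card_mono[OF fin(2) endsV] .
  finally show ?thesis .
qed

lemma regular_handshake:
  assumes "multigraph V E ends" "regular V E ends k"
  shows "k * card V = 2 * card E"
proof -
  have "\<forall>e\<in>E. card {v\<in>V. v \<in> ends e} = 2"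
  proof
    fix e assume "e \<in> E"
    then have "ends e \<subseteq> V" "card (ends e) = 2" using assms(1) by (auto simp: multigraph_def)
    moreover from \<open>ends e \<subseteq> V\<close> have "{v\<in>V. v \<in> ends e} = ends e" by auto
    ultimately show "card {v\<in>V. v \<in> ends e} = 2" by simp
  qed
  then have "(\<Sum>v\<in>V. card {e\<in>E. v \<in> ends e}) = 2 * card E"
    using assms(1) by (intro sum_multicount) (auto simp: multigraph_def)
  then show ?thesis using assms(2) by (simp add: regular_def degree_def mult.commute)
qed

lemma VP_line_graph_sum_le:
  assumes "multigraph V E ends" "a \<in> VP E (line_adj ends)"
  shows "(\<Sum>e\<in>E. a e) \<le> real (card V) / 2"
proof -
  have fin: "finite E" using assms(1) by (auto simp: multigraph_def)
  from assms(2) obtain mu where mu: "\<forall>M\<in>matchings E ends. mu M \<ge> 0"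
    "(\<Sum>M\<in>matchings E ends. mu M) = 1"
    "\<forall>e. a e = (\<Sum>M\<in>matchings E ends. mu M * (if e \<in> M then 1 else 0))"
    unfolding VP_def independent_line_adj_eq_matchings by blast
  have "(\<Sum>e\<in>E. a e) = (\<Sum>M\<in>matchings E ends. \<Sum>e\<in>E. mu M * (if e \<in> M then 1 else 0))"
    using mu(3) by (simp add: sum.swap[of _ E])
  also have "\<dots> = (\<Sum>M\<in>matchings E ends. mu M * real (card M))"
  proof (intro sum.cong refl)
    fix M assume "M \<in> matchings E ends"
    then have "E \<inter> {e. e \<in> M} = M" by (auto simp: matchings_def matching_def)
    then show "(\<Sum>e\<in>E. mu M * (if e \<in> M then 1 else 0)) = mu M * real (card M)"
      using fin by (simp add: sum_distrib_left[symmetric] sum.If_cases)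
  qed
  also have "\<dots> \<le> (\<Sum>M\<in>matchings E ends. mu M * (real (card V) / 2))"
  proof (intro sum_mono mult_left_mono)
    fix M assume M: "M \<in> matchings E ends"
    then have "2 * card M \<le> card V"
      using card_matching_le[OF assms(1)] by (auto simp: matchings_def)
    then show "real (card M) \<le> real (card V) / 2" by linarith
    show "0 \<le> mu M" using mu(1) M by auto
  qed
  also have "\<dots> = real (card V) / 2"
    unfolding sum_distrib_right[symmetric] mu(2) by simp
  finally show ?thesis .
qed

lemma log_degree_le_uniform_entropy_at_VP:
  assumes "multigraph V E ends" "regular V E ends k" "k > 0" "E \<noteq> {}"
    and "a \<in> VP E (line_adj ends)" "\<forall>e\<in>E. a e > 0"
  shows "log 2 (real k) \<le> (\<Sum>e\<in>E. uniform_dist E e * log 2 (1 / a e))"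
proof -
  define n where "n = real (card E)"
  have "n > 0" using assms(1,4) by (simp add: n_def card_gt_0_iff multigraph_def)
  have k: "real k > 0" using assms(3) by simp
  have "(\<Sum>e\<in>E. ln (real k * a e)) \<le> (\<Sum>e\<in>E. real k * a e - 1)"
    using assms(6) k by (intro sum_mono ln_le_minus_one) auto
  also have "\<dots> = real k * (\<Sum>e\<in>E. a e) - n"
    by (simp add: sum_subtractf sum_distrib_left n_def)
  also have "\<dots> \<le> real k * (real (card V) / 2) - n"
    using VP_line_graph_sum_le[OF assms(1,5)] k by simp
  also have "\<dots> = 0"
  proof -
    have "real k * real (card V) = 2 * n"
      using regular_handshake[OF assms(1,2)] unfolding n_def by (metis of_nat_mult of_nat_numeral)
    then show ?thesis by simp
  qed
  finally have sum_ln: "(\<Sum>e\<in>E. ln (real k * a e)) \<le> 0" .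
  have "(\<Sum>e\<in>E. uniform_dist E e * log 2 (1 / a e))
      = (\<Sum>e\<in>E. (ln (real k) - ln (real k * a e)) / (n * ln 2))"
  proof (intro sum.cong refl)
    fix e assume "e \<in> E"
    then have "a e > 0" using assms(6) by blast
    with k show "uniform_dist E e * log 2 (1 / a e)
        = (ln (real k) - ln (real k * a e)) / (n * ln 2)"
      by (simp add: uniform_dist_def n_def log_def ln_mult ln_div)
  qed
  also have "\<dots> = (n * ln (real k) - (\<Sum>e\<in>E. ln (real k * a e))) / (n * ln 2)"
    by (simp add: sum_divide_distrib[symmetric] sum_subtractf n_def)
  also have "\<dots> \<ge> (n * ln (real k)) / (n * ln 2)"
    using sum_ln \<open>n > 0\<close> by (intro divide_right_mono) auto
  finally show ?thesis using \<open>n > 0\<close> by (simp add: log_def)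
qed

lemma log_degree_le_graph_entropy_uniform:
  assumes "multigraph V E ends" "regular V E ends k" "k > 0" "E \<noteq> {}"
  shows "log 2 (real k) \<le> graph_entropy E (line_adj ends) (uniform_dist E)"
  unfolding graph_entropy_def
proof (rule cInf_greatest)
  have fin: "finite E" using assms(1) by (simp add: multigraph_def)
  have uniform_pos: "\<forall>e\<in>E. uniform_dist E e > 0"
    using fin assms(4) by (simp add: uniform_dist_def card_gt_0_iff)
  let ?lam = "\<lambda>M. if card M = 1 then 1 else 0 :: real"
  have lam: "fractional_edge_colouring E ends ?lam"
    using fractional_edge_colouring_singletons[OF fin] .
  obtain a where "a \<in> VP E (line_adj ends)" "\<And>e. e \<in> E \<Longrightarrow> a e = 1 / (\<Sum>M\<in>matchings E ends. ?lam M)"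
    using fractional_edge_colouring_scaled_in_VP[OF lam assms(4)] by blast
  moreover have "(\<Sum>M\<in>matchings E ends. ?lam M) \<ge> 1"
    using assms(4) fractional_edge_colouring_weight_ge_one[OF lam] by blast
  ultimately show "{(\<Sum>i\<in>E. uniform_dist E i * log 2 (1 / a i)) | a.
      a \<in> VP E (line_adj ends) \<and> (\<forall>i\<in>E. uniform_dist E i > 0 \<longrightarrow> a i > 0)} \<noteq> {}"
    by fastforce
  fix x assume "x \<in> {(\<Sum>i\<in>E. uniform_dist E i * log 2 (1 / a i)) | a.
      a \<in> VP E (line_adj ends) \<and> (\<forall>i\<in>E. uniform_dist E i > 0 \<longrightarrow> a i > 0)}"
  then obtain a where "x = (\<Sum>i\<in>E. uniform_dist E i * log 2 (1 / a i))"
    "a \<in> VP E (line_adj ends)" "\<forall>i\<in>E. a i > 0"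
    using uniform_pos by blast
  then show "log 2 (real k) \<le> x" using log_degree_le_uniform_entropy_at_VP[OF assms] by simp
qed

theorem mainTheorem5:
  fixes V :: "'v set" and E :: "'e set" and ends :: "'e \<Rightarrow> 'v set" and k :: nat
  assumes "multigraph V E ends"
    and "k_graph V E ends k"
    and "k \<ge> 3"
  shows "entropy_symmetric E (line_adj ends)"
  unfolding entropy_symmetric_def
proof (intro allI impI)
  fix p assume p: "prob_dist E p"
  have fin: "finite E" using assms(1) by (simp add: multigraph_def)
  have reg: "regular V E ends k" and chi: "frac_edge_chromatic E ends = real k"
    using assms(2) by (auto simp: k_graph_def)
  have "E \<noteq> {}" using chi frac_edge_chromatic_empty[of ends] assms(3) by auto
  have "graph_entropy E (line_adj ends) p \<le> log 2 (real k)"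
    using graph_entropy_line_graph_le_log_frac_edge_chromatic[where ends=ends, OF fin \<open>E \<noteq> {}\<close> p] chi by simp
  also have "\<dots> \<le> graph_entropy E (line_adj ends) (uniform_dist E)"
    using log_degree_le_graph_entropy_uniform[OF assms(1) reg _ \<open>E \<noteq> {}\<close>] assms(3) by simp
  finally show "graph_entropy E (line_adj ends) p \<le> graph_entropy E (line_adj ends) (uniform_dist E)" .
qed

end
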